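(* Let $\mathcal G$ be a convex set of functions $\mathcal X\to\mathbb R^{d_y}$ with $0\in\mathcal G$, let $\theta>8$, $r>0$, $\alpha\in[1,2]$, $C>0$, $S\ge1$. Let $\partial B(r):=\{f\in\mathcal G:\|f\|_{L^2}=r\}$ and let $\mathcal F_r\subseteq\partial B(r)$ be an $r/\sqrt\theta$-cover of $\partial B(r)$ in the norm $\|f\|_\infty=\sup_x\|f(x)\|_2$ of minimal cardinality $N_\infty(\partial B(r),r/\sqrt\theta)$. Assume every $f\in\mathcal F_r$ satisfies $S$-persistence and $(C,\alpha)$-hypercontractivity. Define the event $$\mathcal A_r:=\Big\{\exists f\in\mathcal G:\ \|f\|_{L^2}>r,\ \tfrac1T\textstyle\sum_{t=0}^{T-1}\|f(X_t)\|_2^2\le\tfrac1\theta\|f\|_{L^2}^2\Big\}.$$ Then $$\mathsf P_X(\mathcal A_r)\le N_\infty\big(\partial B(r),\tfrac{r}{\sqrt\theta}\big)\exp\Big\{-\frac{8T\,r^{4-2\alpha}}{\theta^2CS}\Big\}.$$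
   Context: $X=(X_0,\dots,X_{T-1})$ is a random trajectory in a set $\mathcal X^T$ with law $\mathsf P_X$. For $f:\mathcal X\to\mathbb R^{d_y}$, $\|f\|_{L^2}^2:=\frac1T\sum_{t}\mathbb E\|f(X_t)\|_2^2$. A function $f$ satisfies $S$-persistence if for every $\xi\ge0$, $\mathbb E\exp(-\xi\sum_t\|f(X_t)\|_2^2)\le\exp\big(-\xi\sum_t\mathbb E\|f(X_t)\|_2^2+\frac{\xi^2S}{2}\sum_t\mathbb E\|f(X_t)\|_2^4\big)$. A function $f$ is $(C,\alpha)$-hypercontractive if $\frac1T\sum_t\mathbb E\|f(X_t)\|_2^4\le C\big(\frac1T\sum_t\mathbb E\|f(X_t)\|_2^2\big)^\alpha$. (In the paper, $\mathcal G$ is the shifted effective class $\{f-f_\star: f\in\mathcal F,\ \|\mathcal D(f-f_\star)\|_{L^2}^2\le\rho\}$, which is convex and contains $0$.) *)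

theory Defs
  imports "HOL-Probability.Probability"
begin

definition L2sq :: "'w measure \<Rightarrow> (nat \<Rightarrow> 'w \<Rightarrow> 'x) \<Rightarrow> nat \<Rightarrow> ('x \<Rightarrow> 'y::real_normed_vector) \<Rightarrow> real" where
  "L2sq M X T f = (1 / real T) * (\<Sum>t<T. integral\<^sup>L M (\<lambda>\<omega>. (norm (f (X t \<omega>)))^2))"

definition L2norm :: "'w measure \<Rightarrow> (nat \<Rightarrow> 'w \<Rightarrow> 'x) \<Rightarrow> nat \<Rightarrow> ('x \<Rightarrow> 'y::real_normed_vector) \<Rightarrow> real" where
  "L2norm M X T f = sqrt (L2sq M X T f)"

definition persistent :: "'w measure \<Rightarrow> (nat \<Rightarrow> 'w \<Rightarrow> 'x) \<Rightarrow> nat \<Rightarrow> real \<Rightarrow> ('x \<Rightarrow> 'y::real_normed_vector) \<Rightarrow> bool" where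
  "persistent M X T S f \<longleftrightarrow> (\<forall>\<xi>::real. \<xi> \<ge> 0 \<longrightarrow>
     integral\<^sup>L M (\<lambda>\<omega>. exp (- \<xi> * (\<Sum>t<T. (norm (f (X t \<omega>)))^2)))
     \<le> exp (- \<xi> * (\<Sum>t<T. integral\<^sup>L M (\<lambda>\<omega>. (norm (f (X t \<omega>)))^2))
             + \<xi>^2 * S / 2 * (\<Sum>t<T. integral\<^sup>L M (\<lambda>\<omega>. (norm (f (X t \<omega>)))^4))))"

definition hypercontractive :: "'w measure \<Rightarrow> (nat \<Rightarrow> 'w \<Rightarrow> 'x) \<Rightarrow> nat \<Rightarrow> real \<Rightarrow> real \<Rightarrow> ('x \<Rightarrow> 'y::real_normed_vector) \<Rightarrow> bool" where
  "hypercontractive M X T C \<alpha> f \<longleftrightarrow>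
     (1 / real T) * (\<Sum>t<T. integral\<^sup>L M (\<lambda>\<omega>. (norm (f (X t \<omega>)))^4))
     \<le> C * (L2sq M X T f) powr \<alpha>"

definition fun_convex :: "('x \<Rightarrow> 'y::real_vector) set \<Rightarrow> bool" where
  "fun_convex G \<longleftrightarrow> (\<forall>f\<in>G. \<forall>g\<in>G. \<forall>u::real. 0 \<le> u \<and> u \<le> 1 \<longrightarrow>
      (\<lambda>x. u *\<^sub>R f x + (1 - u) *\<^sub>R g x) \<in> G)"

definition L2sphere :: "'w measure \<Rightarrow> (nat \<Rightarrow> 'w \<Rightarrow> 'x) \<Rightarrow> nat \<Rightarrow> ('x \<Rightarrow> 'y::real_normed_vector) set \<Rightarrow> real \<Rightarrow> ('x \<Rightarrow> 'y) set" where
  "L2sphere M X T G r = {f\<in>G. L2norm M X T f = r}"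

definition sup_cover :: "('x \<Rightarrow> 'y::real_normed_vector) set \<Rightarrow> real \<Rightarrow> ('x \<Rightarrow> 'y) set \<Rightarrow> bool" where
  "sup_cover A \<epsilon> F \<longleftrightarrow> F \<subseteq> A \<and> (\<forall>f\<in>A. \<exists>g\<in>F. \<forall>x. norm (f x - g x) \<le> \<epsilon>)"

end

theory Submission
  imports Defs
begin

text \<open>
  Shrinking a function \<open>f \<in> \<G>\<close> with \<open>\<parallel>f\<parallel> > r\<close> towards 0 keeps it in the convex class \<open>\<G>\<close>,
  moves it onto the sphere \<open>\<partial>B(r)\<close> and scales its empirical energy \<open>\<Sum>\<^sub>t \<parallel>f(X\<^sub>t)\<parallel>\<^sup>2\<close> by the
  same factor. So on the event \<open>\<A>\<^sub>r\<close> some g on the sphere has empirical energy at most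
  \<open>T r\<^sup>2/\<theta>\<close>, and the element h of the cover within sup-distance \<open>r/\<surd>\<theta>\<close> of g has empirical energy
  at most \<open>4 T r\<^sup>2/\<theta>\<close>. For each fixed h of the cover, a Chernoff bound with persistence and
  hypercontractivity bounds the probability of this by
  \<open>exp (4 \<xi> T r\<^sup>2/\<theta> - \<xi> T r\<^sup>2 + \<xi>\<^sup>2 T K/2)\<close> with \<open>K = C S r\<^sup>2\<^sup>\<alpha>\<close>; for \<open>\<xi> = r\<^sup>2/(2K)\<close> and
  \<open>\<theta> > 8\<close> the exponent is at most \<open>-8 T r\<^sup>4/(K \<theta>\<^sup>2)\<close>. A union bound over the cover concludes.
\<close>

definition emp_sq :: "(nat \<Rightarrow> 'w \<Rightarrow> 'x) \<Rightarrow> nat \<Rightarrow> ('x \<Rightarrow> 'y::real_normed_vector) \<Rightarrow> 'w \<Rightarrow> real" where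
  "emp_sq X T f \<omega> = (\<Sum>t<T. (norm (f (X t \<omega>)))^2)"

lemma emp_sq_nonneg: "0 \<le> emp_sq X T f \<omega>"
  by (simp add: emp_sq_def sum_nonneg)

lemma emp_sq_scaleR: "emp_sq X T (\<lambda>x. c *\<^sub>R f x) \<omega> = c^2 * emp_sq X T f \<omega>"
  by (simp add: emp_sq_def power_mult_distrib sum_distrib_left)

lemma emp_sq_measurable:
  assumes "\<forall>t<T. X t \<in> measurable M N" and "f \<in> borel_measurable N"
  shows "emp_sq X T f \<in> borel_measurable M"
proof -
  have "(\<lambda>\<omega>. f (X t \<omega>)) \<in> borel_measurable M" if "t < T" for t
    using assms that measurable_compose by blast
  then show ?thesis
    unfolding emp_sq_def by measurable
qed

lemma emp_sq_le_event_sets: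
  assumes "\<forall>t<T. X t \<in> measurable M N" and "f \<in> borel_measurable N"
  shows "{\<omega>\<in>space M. emp_sq X T f \<omega> \<le> a} \<in> sets M"
  using emp_sq_measurable[OF assms] by measurable

lemma emp_sq_le_of_sup_dist:
  assumes "\<And>x. norm (g x - h x) \<le> \<epsilon>"
  shows "emp_sq X T h \<omega> \<le> 2 * emp_sq X T g \<omega> + 2 * real T * \<epsilon>^2"
proof -
  have "(norm (h x))^2 \<le> 2 * (norm (g x))^2 + 2 * \<epsilon>^2" for x
  proof -
    have "norm (h x) \<le> norm (g x) + \<epsilon>"
      using norm_triangle_sub[of "h x" "g x"] assms[of x] by (simp add: norm_minus_commute)
    then have "(norm (h x))^2 \<le> (norm (g x) + \<epsilon>)^2"
      by (simp add: power_mono)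
    also have "\<dots> = 2 * (norm (g x))^2 + 2 * \<epsilon>^2 - (norm (g x) - \<epsilon>)^2"
      by (simp add: power2_eq_square algebra_simps)
    also have "\<dots> \<le> 2 * (norm (g x))^2 + 2 * \<epsilon>^2"
      by simp
    finally show ?thesis .
  qed
  then have "emp_sq X T h \<omega> \<le> (\<Sum>t<T. 2 * (norm (g (X t \<omega>)))^2 + 2 * \<epsilon>^2)"
    unfolding emp_sq_def by (intro sum_mono)
  then show ?thesis
    by (simp add: emp_sq_def sum.distrib sum_distrib_left)
qed

lemma L2sq_nonneg: "0 \<le> L2sq M X T f"
  unfolding L2sq_def by (intro mult_nonneg_nonneg sum_nonneg integral_nonneg_AE) auto

lemma L2norm_sq: "(L2norm M X T f)^2 = L2sq M X T f"
  by (simp add: L2norm_def L2sq_nonneg)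

lemma L2sq_scaleR: "L2sq M X T (\<lambda>x. c *\<^sub>R f x) = c^2 * L2sq M X T f"
  by (simp add: L2sq_def power_mult_distrib sum_distrib_left)

lemma L2norm_scaleR: "L2norm M X T (\<lambda>x. c *\<^sub>R f x) = \<bar>c\<bar> * L2norm M X T f"
  by (simp add: L2norm_def L2sq_scaleR real_sqrt_mult)

lemma fun_convex_scaleR_mem:
  assumes "fun_convex G" and "(\<lambda>x. 0) \<in> G" and "f \<in> G" and "0 \<le> u" and "u \<le> 1"
  shows "(\<lambda>x. u *\<^sub>R f x) \<in> G"
proof -
  have "(\<lambda>x. u *\<^sub>R f x + (1 - u) *\<^sub>R (\<lambda>x. 0) x) \<in> G"
    using assms(4,5) by (intro assms(1)[unfolded fun_convex_def, rule_format, OF assms(3,2)]) simp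
  then show ?thesis
    by simp
qed

lemma scaleR_mem_L2sphere:
  assumes "fun_convex G" and "(\<lambda>x. 0) \<in> G" and "f \<in> G"
    and "0 < r" and "r \<le> L2norm M X T f"
  shows "(\<lambda>x. (r / L2norm M X T f) *\<^sub>R f x) \<in> L2sphere M X T G r"
proof -
  have "0 < L2norm M X T f"
    using assms by linarith
  then show ?thesis
    using assms fun_convex_scaleR_mem[of G f "r / L2norm M X T f"]
    by (simp add: L2sphere_def L2norm_scaleR)
qed

lemma chernoff_lower_tail:
  fixes Z :: "'w \<Rightarrow> real"
  assumes "prob_space M" and "Z \<in> borel_measurable M" and "0 \<le> \<xi>"
    and "\<And>\<omega>. \<omega> \<in> space M \<Longrightarrow> 0 \<le> Z \<omega>"
  shows "measure M {\<omega>\<in>space M. Z \<omega> \<le> a} \<le> (\<integral>\<omega>. exp (- \<xi> * Z \<omega>) \<partial>M) * exp (\<xi> * a)"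
proof -
  interpret prob_space M by fact
  have integrable: "integrable M (\<lambda>\<omega>. exp (- \<xi> * Z \<omega>))"
  proof (rule integrable_const_bound[where B = 1])
    show "AE \<omega> in M. norm (exp (- \<xi> * Z \<omega>)) \<le> 1"
      using assms by (intro AE_I2) auto
  qed (use assms in measurable)
  have "measure M {\<omega>\<in>space M. Z \<omega> \<le> a}
      \<le> measure M {\<omega>\<in>space M. exp (- \<xi> * a) \<le> exp (- \<xi> * Z \<omega>)}"
    using assms by (intro finite_measure_mono) (auto intro: mult_left_mono)
  also have "\<dots> \<le> (\<integral>\<omega>. exp (- \<xi> * Z \<omega>) \<partial>M) / exp (- \<xi> * a)"
    by (rule integral_Markov_inequality_measure[OF integrable, where A = "space M"]) auto
  finally show ?thesis
    by (simp add: exp_minus divide_inverse)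
qed

lemma persistent_lower_tail:
  assumes "prob_space M" and "\<forall>t<T. X t \<in> measurable M N" and "f \<in> borel_measurable N"
    and "persistent M X T S f" and "0 \<le> \<xi>"
  shows "measure M {\<omega>\<in>space M. emp_sq X T f \<omega> \<le> a}
    \<le> exp (\<xi> * a - \<xi> * (\<Sum>t<T. \<integral>\<omega>. (norm (f (X t \<omega>)))^2 \<partial>M)
          + \<xi>^2 * S / 2 * (\<Sum>t<T. \<integral>\<omega>. (norm (f (X t \<omega>)))^4 \<partial>M))"
proof -
  have "measure M {\<omega>\<in>space M. emp_sq X T f \<omega> \<le> a}
      \<le> (\<integral>\<omega>. exp (- \<xi> * emp_sq X T f \<omega>) \<partial>M) * exp (\<xi> * a)"
    using assms by (intro chernoff_lower_tail emp_sq_measurable emp_sq_nonneg)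
  also have "\<dots> \<le> exp (- \<xi> * (\<Sum>t<T. \<integral>\<omega>. (norm (f (X t \<omega>)))^2 \<partial>M)
          + \<xi>^2 * S / 2 * (\<Sum>t<T. \<integral>\<omega>. (norm (f (X t \<omega>)))^4 \<partial>M)) * exp (\<xi> * a)"
    using assms(4,5) unfolding persistent_def emp_sq_def by (intro mult_right_mono) auto
  finally show ?thesis
    by (simp add: exp_add[symmetric] algebra_simps)
qed

(* \<xi> = b/(2K) minimises the quadratic -\<xi> T b + \<xi>\<^sup>2 T K/2 in the Chernoff exponent. *)
lemma chernoff_exponent_bound:
  fixes \<theta> K b T :: real
  assumes "8 < \<theta>" and "0 < K" and "0 \<le> T"
  shows "b / (2 * K) * (4 * T * b / \<theta>) - b / (2 * K) * (T * b) + (b / (2 * K))^2 / 2 * (T * K)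
    \<le> - 8 * T * b^2 / (K * \<theta>^2)"
proof -
  have "2 / \<theta> \<le> 1 / 4"
    using assms by (simp add: field_simps)
  moreover have "8 / \<theta>^2 \<le> 1 / 8"
    using assms power_strict_mono[of 8 \<theta> 2] by (simp add: field_simps)
  ultimately have "2 / \<theta> - 3 / 8 \<le> - 8 / \<theta>^2"
    by linarith
  have "b / (2 * K) * (4 * T * b / \<theta>) - b / (2 * K) * (T * b) + (b / (2 * K))^2 / 2 * (T * K)
      = T * b^2 / K * (2 / \<theta> - 3 / 8)"
    using assms by (simp add: field_simps power2_eq_square)
  also have "\<dots> \<le> T * b^2 / K * (- 8 / \<theta>^2)"
    using assms \<open>2 / \<theta> - 3 / 8 \<le> - 8 / \<theta>^2\<close> by (intro mult_left_mono) auto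
  also have "\<dots> = - 8 * T * b^2 / (K * \<theta>^2)"
    by simp
  finally show ?thesis .
qed

lemma L2sphere_lower_tail:
  assumes "prob_space M" and "0 < T" and "\<forall>t<T. X t \<in> measurable M N" and "f \<in> borel_measurable N"
    and "persistent M X T S f" and "hypercontractive M X T C \<alpha> f"
    and "L2norm M X T f = r" and "0 < r" and "8 < \<theta>" and "0 < C" and "0 < S"
  shows "measure M {\<omega>\<in>space M. emp_sq X T f \<omega> \<le> 4 * real T * r^2 / \<theta>}
    \<le> exp (- (8 * real T * r powr (4 - 2 * \<alpha>)) / (\<theta>^2 * C * S))"
proof -
  define K where "K = C * S * r powr (2 * \<alpha>)"
  have K: "0 < K"
    using assms by (simp add: K_def)
  have L2sq: "L2sq M X T f = r^2"
    using assms L2norm_sq[of M X T f] by simp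
  have moment2: "(\<Sum>t<T. \<integral>\<omega>. (norm (f (X t \<omega>)))^2 \<partial>M) = real T * r^2"
    using L2sq assms(2) by (simp add: L2sq_def field_simps)
  have "(1 / real T) * (\<Sum>t<T. \<integral>\<omega>. (norm (f (X t \<omega>)))^4 \<partial>M) \<le> C * r powr (2 * \<alpha>)"
    using assms(6,8) L2sq by (simp add: hypercontractive_def powr_powr[symmetric])
  then have moment4: "S * (\<Sum>t<T. \<integral>\<omega>. (norm (f (X t \<omega>)))^4 \<partial>M) \<le> real T * K"
    using assms(2,11) by (simp add: K_def field_simps)
  define \<xi> where "\<xi> = r^2 / (2 * K)"
  have "0 \<le> \<xi>"
    using K by (simp add: \<xi>_def)
  have "\<xi>^2 * S / 2 * (\<Sum>t<T. \<integral>\<omega>. (norm (f (X t \<omega>)))^4 \<partial>M) \<le> \<xi>^2 / 2 * (real T * K)"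
    using mult_left_mono[OF moment4, of "\<xi>^2 / 2"] by (simp add: algebra_simps)
  have "measure M {\<omega>\<in>space M. emp_sq X T f \<omega> \<le> 4 * real T * r^2 / \<theta>}
      \<le> exp (\<xi> * (4 * real T * r^2 / \<theta>) - \<xi> * (real T * r^2)
          + \<xi>^2 * S / 2 * (\<Sum>t<T. \<integral>\<omega>. (norm (f (X t \<omega>)))^4 \<partial>M))"
    using persistent_lower_tail[OF assms(1,3,4,5) \<open>0 \<le> \<xi>\<close>] unfolding moment2 .
  also have "\<dots> \<le> exp (\<xi> * (4 * real T * r^2 / \<theta>) - \<xi> * (real T * r^2) + \<xi>^2 / 2 * (real T * K))"
    using \<open>\<xi>^2 * S / 2 * _ \<le> _\<close> by simp
  also have "\<dots> \<le> exp (- 8 * real T * (r^2)^2 / (K * \<theta>^2))"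
    using chernoff_exponent_bound[OF assms(9) K, where b = "r^2" and T = "real T"] by (simp add: \<xi>_def)
  also have "\<dots> = exp (- (8 * real T * r powr (4 - 2 * \<alpha>)) / (\<theta>^2 * C * S))"
  proof -
    have "(r^2)^2 = r powr (4 - 2 * \<alpha>) * r powr (2 * \<alpha>)"
      using assms(8) by (simp add: powr_add[symmetric])
    moreover have "0 < r powr (2 * \<alpha>)"
      using assms(8) by simp
    ultimately show ?thesis
      using assms(10,11) by (simp add: K_def field_simps)
  qed
  finally show ?thesis .
qed

lemma sup_cover_elem_small_emp_sq:
  assumes "fun_convex G" and "(\<lambda>x. 0) \<in> G" and "0 < r" and "0 < \<theta>" and "0 < T"
    and "sup_cover (L2sphere M X T G r) (r / sqrt \<theta>) F"
    and "f \<in> G" and "r < L2norm M X T f"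
    and "(1 / real T) * emp_sq X T f \<omega> \<le> (1 / \<theta>) * (L2norm M X T f)^2"
  shows "\<exists>h\<in>F. emp_sq X T h \<omega> \<le> 4 * real T * r^2 / \<theta>"
proof -
  define L where "L = L2norm M X T f"
  define g where "g = (\<lambda>x. (r / L) *\<^sub>R f x)"
  have "g \<in> L2sphere M X T G r"
    unfolding g_def L_def using assms by (intro scaleR_mem_L2sphere) auto
  then obtain h where "h \<in> F" and "\<And>x. norm (g x - h x) \<le> r / sqrt \<theta>"
    using assms(6) unfolding sup_cover_def by blast
  then have "emp_sq X T h \<omega> \<le> 2 * emp_sq X T g \<omega> + 2 * real T * (r / sqrt \<theta>)^2"
    by (intro emp_sq_le_of_sup_dist)
  moreover have "emp_sq X T g \<omega> \<le> real T * r^2 / \<theta>"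
  proof -
    have "0 < L"
      using assms(3,8) by (simp add: L_def)
    have "emp_sq X T g \<omega> = (r / L)^2 * emp_sq X T f \<omega>"
      by (simp add: g_def emp_sq_scaleR)
    also have "\<dots> \<le> (r / L)^2 * (real T / \<theta> * L^2)"
      using assms(5,9) by (intro mult_left_mono) (simp_all add: L_def field_simps)
    also have "\<dots> = real T * r^2 / \<theta>"
      using \<open>0 < L\<close> by (simp add: field_simps)
    finally show ?thesis .
  qed
  ultimately have "emp_sq X T h \<omega> \<le> 4 * real T * r^2 / \<theta>"
    using assms(4) by (simp add: field_simps)
  then show ?thesis
    using \<open>h \<in> F\<close> by blast
qed

lemma small_emp_sq_event_subset:
  assumes "fun_convex G" and "(\<lambda>x. 0) \<in> G" and "0 < r" and "0 < \<theta>" and "0 < T"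
    and "sup_cover (L2sphere M X T G r) (r / sqrt \<theta>) F"
  shows "{\<omega>\<in>space M. \<exists>f\<in>G. L2norm M X T f > r \<and>
           (1 / real T) * (\<Sum>t<T. (norm (f (X t \<omega>)))^2) \<le> (1 / \<theta>) * (L2norm M X T f)^2}
    \<subseteq> (\<Union>h\<in>F. {\<omega>\<in>space M. emp_sq X T h \<omega> \<le> 4 * real T * r^2 / \<theta>})"
proof
  fix \<omega>
  assume "\<omega> \<in> {\<omega>\<in>space M. \<exists>f\<in>G. L2norm M X T f > r \<and>
           (1 / real T) * (\<Sum>t<T. (norm (f (X t \<omega>)))^2) \<le> (1 / \<theta>) * (L2norm M X T f)^2}"
  then obtain f where "\<omega> \<in> space M" and "f \<in> G" and "r < L2norm M X T f"
    and "(1 / real T) * emp_sq X T f \<omega> \<le> (1 / \<theta>) * (L2norm M X T f)^2"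
    unfolding emp_sq_def by blast
  moreover obtain h where "h \<in> F" and "emp_sq X T h \<omega> \<le> 4 * real T * r^2 / \<theta>"
    using sup_cover_elem_small_emp_sq[OF assms calculation(2-4)] by blast
  ultimately show "\<omega> \<in> (\<Union>h\<in>F. {\<omega>\<in>space M. emp_sq X T h \<omega> \<le> 4 * real T * r^2 / \<theta>})"
    by blast
qed

lemma measure_UN_le_card_mult:
  assumes "finite I" and "\<And>i. i \<in> I \<Longrightarrow> A i \<in> sets M" and "\<And>i. i \<in> I \<Longrightarrow> measure M (A i) \<le> b"
  shows "measure M (\<Union>i\<in>I. A i) \<le> real (card I) * b"
proof -
  have "measure M (\<Union>i\<in>I. A i) \<le> (\<Sum>i\<in>I. measure M (A i))"
    using assms(1,2) by (rule measure_UNION_le)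
  also have "\<dots> \<le> (\<Sum>i\<in>I. b)"
    using assms(3) by (rule sum_mono)
  finally show ?thesis
    by simp
qed

theorem mainTheorem7:
  fixes M :: "'w measure" and N :: "'x measure" and X :: "nat \<Rightarrow> 'w \<Rightarrow> 'x" and T :: nat
    and G :: "('x \<Rightarrow> 'y::euclidean_space) set" and Fr :: "('x \<Rightarrow> 'y) set"
    and \<theta> r \<alpha> C S :: real
  assumes "prob_space M" and "T > 0"
    and "\<forall>t<T. X t \<in> measurable M N"
    and "fun_convex G" and "(\<lambda>x. 0) \<in> G"
    and "\<forall>f\<in>G. f \<in> borel_measurable N"
    and "\<forall>f\<in>G. \<forall>t<T. integrable M (\<lambda>\<omega>. (norm (f (X t \<omega>)))^2)"
    and "\<theta> > 8" and "r > 0" and "1 \<le> \<alpha>" and "\<alpha> \<le> 2" and "C > 0" and "S \<ge> 1"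
    and "finite Fr" and "sup_cover (L2sphere M X T G r) (r / sqrt \<theta>) Fr"
    and "\<forall>F'. finite F' \<and> sup_cover (L2sphere M X T G r) (r / sqrt \<theta>) F' \<longrightarrow> card Fr \<le> card F'"
    and "\<forall>f\<in>Fr. \<forall>t<T. integrable M (\<lambda>\<omega>. (norm (f (X t \<omega>)))^4)"
    and "\<forall>f\<in>Fr. persistent M X T S f"
    and "\<forall>f\<in>Fr. hypercontractive M X T C \<alpha> f"
  shows "\<exists>E\<in>sets M.
           {\<omega>\<in>space M. \<exists>f\<in>G. L2norm M X T f > r \<and>
              (1 / real T) * (\<Sum>t<T. (norm (f (X t \<omega>)))^2) \<le> (1 / \<theta>) * (L2norm M X T f)^2} \<subseteq> E
         \<and> measure M E \<le> real (card Fr) * exp (- (8 * real T * r powr (4 - 2 * \<alpha>)) / (\<theta>^2 * C * S))"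
proof -
  define E where "E = (\<Union>h\<in>Fr. {\<omega>\<in>space M. emp_sq X T h \<omega> \<le> 4 * real T * r^2 / \<theta>})"
  have cover_sphere: "h \<in> G" "L2norm M X T h = r" if "h \<in> Fr" for h
    using assms(15) that by (auto simp: sup_cover_def L2sphere_def)
  have events: "{\<omega>\<in>space M. emp_sq X T h \<omega> \<le> 4 * real T * r^2 / \<theta>} \<in> sets M" if "h \<in> Fr" for h
    using assms(6) cover_sphere(1)[OF that] by (intro emp_sq_le_event_sets[OF assms(3)]) blast
  have tails: "measure M {\<omega>\<in>space M. emp_sq X T h \<omega> \<le> 4 * real T * r^2 / \<theta>}
      \<le> exp (- (8 * real T * r powr (4 - 2 * \<alpha>)) / (\<theta>^2 * C * S))" if "h \<in> Fr" for h
  proof (rule L2sphere_lower_tail[OF assms(1-3) _ _ _ _ assms(9,8,12)])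
    show "h \<in> borel_measurable N"
      using assms(6) cover_sphere(1)[OF that] by blast
    show "persistent M X T S h" and "hypercontractive M X T C \<alpha> h"
      using assms(18,19) that by blast+
    show "L2norm M X T h = r"
      using cover_sphere(2)[OF that] .
    show "0 < S"
      using assms(13) by simp
  qed
  have "{\<omega>\<in>space M. \<exists>f\<in>G. L2norm M X T f > r \<and>
           (1 / real T) * (\<Sum>t<T. (norm (f (X t \<omega>)))^2) \<le> (1 / \<theta>) * (L2norm M X T f)^2} \<subseteq> E"
    unfolding E_def using assms(8) by (intro small_emp_sq_event_subset assms(4,5,9,2,15)) simp
  moreover have "E \<in> sets M"
    unfolding E_def using assms(14) events by (rule sets.finite_UN)
  moreover have "measure M E \<le> real (card Fr) * exp (- (8 * real T * r powr (4 - 2 * \<alpha>)) / (\<theta>^2 * C * S))"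
    unfolding E_def using assms(14) events tails by (rule measure_UN_le_card_mult)
  ultimately show ?thesis
    by blast
qed

end
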